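(* Let $W$ be a central type and let $t$ be a closed expression with $\vdash t:W$ in $\mathcal{L}$ (the rule (struct) may be used). For all values $v$ and lists of resources $l,l'$, if $\langle t\mid\star\mid l\rangle^+\rightsquigarrow^*\langle v\mid\star\mid l'\rangle^{\varepsilon}$ for some polarity $\varepsilon$, then there exists a permutation $\sigma$ such that $l'=\sigma(l)$ (i.e. $l'$ is obtained by reordering the elements of $l$).
   Context: Polarities are $\varepsilon\in\{+,-\}$. Types: positive $P,Q ::= R \mid 1 \mid A\otimes B \mid A\oplus B$; negative $N,M ::= A\multimap B \mid A\,\&\,B$; $\varpi(P)=+$, $\varpi(N)=-$ ($R$ is an atomic type of resources). Central types are $W ::= 1\mid W\otimes W'\mid W\oplus W'$. Fix variables and resource constants $r_n$ ($n\in\mathbb N$). Expressions $t,u$ and values $v,w$: $t,u ::= v \mid (\mathrm{let}\ x^+=t\ \mathrm{in}\ u)^+ \mid (\mathrm{let}\ x^-=v\ \mathrm{in}\ u)^+ \mid \delta(v,(x,y).t)^+ \mid \delta(v,().t)^+ \mid \delta(v,x.t,y.u)^+ \mid (v\,w)^+ \mid (\pi_1 v)^+ \mid (\pi_2 v)^+$; $v,w ::= (\mathrm{let}\ x^+=t\ \mathrm{in}\ v)^- \mid (\mathrm{let}\ x^-=v\ \mathrm{in}\ w)^- \mid \delta(v,(x,y).w)^- \mid \delta(v,().w)^- \mid \delta(v,x.w,y.w')^- \mid (v\,w)^- \mid (\pi_1 v)^- \mid (\pi_2 v)^- \mid x \mid \mathrm{new} \mid \mathrm{delete} \mid (v,w)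 \mid () \mid \iota_1 v \mid \iota_2 v \mid \lambda x.t \mid \langle t,u\rangle \mid r_n$. $t[v/x]$ is capture-avoiding substitution. Contexts are finite lists of typed variables. Typing rules of $\mathcal{L}$ ($v,w$ range over values): (var) $x:A\vdash x:A$. (struct) from $\Gamma\vdash t:A$ and a type-preserving bijection $\sigma$ from entries of $\Gamma$ to entries of $\Gamma'$ (permutation plus renaming) derive $\Gamma'\vdash t[\sigma]:A$. $\vdash\mathrm{new}:1\multimap(R\oplus 1)$; $\vdash\mathrm{delete}:R\multimap 1$. (let) from $\Delta\vdash t:A$, $\Gamma,x:A\vdash u:B$ derive $\Gamma,\Delta\vdash(\mathrm{let}\ x^{\varpi(A)}=t\ \mathrm{in}\ u)^{\varpi(B)}:B$. From $\Gamma\vdash v:A$, $\Delta\vdash w:B$ derive $\Gamma,\Delta\vdash(v,w):A\otimes B$; from $\Delta\vdash v:A\otimes B$, $\Gamma,x:A,y:B,\Gamma'\vdash t:C$ derive $\Gamma,\Delta,\Gamma'\vdash\delta(v,(x,y).t)^{\varpi(C)}:C$. $\vdash():1$; from $\Delta\vdash v:1$, $\Gamma,\Gamma'\vdash t:A$ derive $\Gamma,\Delta,\Gamma'\vdash\delta(v,().t)^{\varpi(A)}:A$. From $\Gamma\vdash v:A$ derive $\Gamma\vdash\iota_1v:A\oplus B$; from $\Gamma\vdash v:B$ derive $\Gamma\vdash\iota_2v:A\oplus B$; from $\Delta\vdash v:A\oplus B$, $\Gamma,x:A,\Gamma'\vdash t:C$, $\Gamma,y:B,\Gamma'\vdash u:C$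 derive $\Gamma,\Delta,\Gamma'\vdash\delta(v,x.t,y.u)^{\varpi(C)}:C$. From $x:A,\Gamma\vdash t:B$ derive $\Gamma\vdash\lambda x.t:A\multimap B$; from $\Gamma\vdash w:A$, $\Delta\vdash v:A\multimap B$ derive $\Gamma,\Delta\vdash(v\,w)^{\varpi(B)}:B$. From $\Gamma\vdash t:A$, $\Gamma\vdash u:B$ derive $\Gamma\vdash\langle t,u\rangle:A\&B$; from $\Gamma\vdash v:A_1\&A_2$ derive $\Gamma\vdash(\pi_iv)^{\varpi(A_i)}:A_i$. Machine: stacks $s ::= \star \mid v^\varepsilon\cdot s \mid \pi_i^\varepsilon\cdot s \mid (x^+.u)^\varepsilon\cdot s$; lists of resources $l ::= []\mid r_n::l$ (the freelist); commands $\langle t\mid s\mid l\rangle^\varepsilon$; $\rightsquigarrow^*$ is the reflexive-transitive closure of the one-step reduction $\rightsquigarrow$ given by ($i\in\{1,2\}$): $\langle(\mathrm{let}\ x^-=v\ \mathrm{in}\ t)^\varepsilon\mid s\mid l\rangle^\varepsilon\rightsquigarrow\langle t[v/x]\mid s\mid l\rangle^\varepsilon$; $\langle(\mathrm{let}\ x^+=t\ \mathrm{in}\ u)^\varepsilon\mid s\mid l\rangle^\varepsilon\rightsquigarrow\langle t\mid (x^+.u)^\varepsilon\cdot s\mid l\rangle^+$; $\langle v\mid (x^+.t)^\varepsilon\cdot s\mid l\rangle^+\rightsquigarrow\langle t[v/x]\mid s\mid l\rangle^\varepsilon$; $\langle (v\,w)^\varepsilon\mid s\mid l\rangle^\varepsilon\rightsquigarrow\langle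 v\mid w^\varepsilon\cdot s\mid l\rangle^-$; $\langle \lambda x.t\mid v^\varepsilon\cdot s\mid l\rangle^-\rightsquigarrow\langle t[v/x]\mid s\mid l\rangle^\varepsilon$; $\langle (\pi_i v)^\varepsilon\mid s\mid l\rangle^\varepsilon\rightsquigarrow\langle v\mid \pi_i^\varepsilon\cdot s\mid l\rangle^-$; $\langle \langle t_1,t_2\rangle\mid \pi_i^\varepsilon\cdot s\mid l\rangle^-\rightsquigarrow\langle t_i\mid s\mid l\rangle^\varepsilon$; $\langle \delta((v,w),(x,y).t)^\varepsilon\mid s\mid l\rangle^\varepsilon\rightsquigarrow\langle t[v/x,w/y]\mid s\mid l\rangle^\varepsilon$; $\langle \delta((),().t)^\varepsilon\mid s\mid l\rangle^\varepsilon\rightsquigarrow\langle t\mid s\mid l\rangle^\varepsilon$; $\langle \delta(\iota_i v,x_1.t_1,x_2.t_2)^\varepsilon\mid s\mid l\rangle^\varepsilon\rightsquigarrow\langle t_i[v/x_i]\mid s\mid l\rangle^\varepsilon$; $\langle \mathrm{new}\mid ()^{\varepsilon}\cdot s\mid r_n::l\rangle^-\rightsquigarrow\langle \iota_1 r_n\mid s\mid l\rangle^+$; $\langle \mathrm{new}\mid ()^{\varepsilon}\cdot s\mid []\rangle^-\rightsquigarrow\langle \iota_2 ()\mid s\mid []\rangle^+$; $\langle \mathrm{delete}\mid r_n^{\varepsilon}\cdot s\mid l\rangle^-\rightsquigarrow\langle ()\mid s\mid r_n::l\rangle^+$. *)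

theory Defs
  imports Main "HOL-Combinatorics.Permutations"
begin

datatype pol = Pos | Neg

datatype ty = TR | TOne | TTensor ty ty | TPlus ty ty | TLolli ty ty | TWith ty ty

fun polty :: "ty \<Rightarrow> pol" where
  "polty TR = Pos" | "polty TOne = Pos" | "polty (TTensor _ _) = Pos" | "polty (TPlus _ _) = Pos"
| "polty (TLolli _ _) = Neg" | "polty (TWith _ _) = Neg"

inductive central :: "ty \<Rightarrow> bool" where
  "central TOne"
| "central W \<Longrightarrow> central W' \<Longrightarrow> central (TTensor W W')"
| "central W \<Longrightarrow> central W' \<Longrightarrow> central (TPlus W W')"

section \<open>Raw syntax (one datatype with polarity tags; the grammar is carved out by is_exp / is_val)\<close>

type_synonym vname = nat

datatype tm =
    Var vname
  | New
  | Delete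
  | Pair tm tm
  | Unit
  | Inj1 tm | Inj2 tm
  | Lam vname tm
  | WPair tm tm
  | Res nat
  | Let pol vname tm tm pol           (* (let x^p = t in u)^q *)
  | DTens tm vname vname tm pol       (* delta(v,(x,y).t)^q *)
  | DOne tm tm pol                    (* delta(v,().t)^q *)
  | DSum tm vname tm vname tm pol     (* delta(v,x.t,y.u)^q *)
  | App tm tm pol
  | Proj nat tm pol                   (* (pi_i v)^q, i in {1,2} *)

inductive is_exp :: "tm \<Rightarrow> bool" and is_val :: "tm \<Rightarrow> bool" where
  "is_val v \<Longrightarrow> is_exp v"
| "is_exp t \<Longrightarrow> is_exp u \<Longrightarrow> is_exp (Let Pos x t u Pos)"
| "is_val v \<Longrightarrow> is_exp u \<Longrightarrow> is_exp (Let Neg x v u Pos)"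
| "is_val v \<Longrightarrow> is_exp t \<Longrightarrow> is_exp (DTens v x y t Pos)"
| "is_val v \<Longrightarrow> is_exp t \<Longrightarrow> is_exp (DOne v t Pos)"
| "is_val v \<Longrightarrow> is_exp t \<Longrightarrow> is_exp u \<Longrightarrow> is_exp (DSum v x t y u Pos)"
| "is_val v \<Longrightarrow> is_val w \<Longrightarrow> is_exp (App v w Pos)"
| "i \<in> {1,2} \<Longrightarrow> is_val v \<Longrightarrow> is_exp (Proj i v Pos)"
| "is_exp t \<Longrightarrow> is_val v \<Longrightarrow> is_val (Let Pos x t v Neg)"
| "is_val v \<Longrightarrow> is_val w \<Longrightarrow> is_val (Let Neg x v w Neg)"
| "is_val v \<Longrightarrow> is_val w \<Longrightarrow> is_val (DTens v x y w Neg)"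
| "is_val v \<Longrightarrow> is_val w \<Longrightarrow> is_val (DOne v w Neg)"
| "is_val v \<Longrightarrow> is_val w \<Longrightarrow> is_val w' \<Longrightarrow> is_val (DSum v x w y w' Neg)"
| "is_val v \<Longrightarrow> is_val w \<Longrightarrow> is_val (App v w Neg)"
| "i \<in> {1,2} \<Longrightarrow> is_val v \<Longrightarrow> is_val (Proj i v Neg)"
| "is_val (Var x)"
| "is_val New"
| "is_val Delete"
| "is_val v \<Longrightarrow> is_val w \<Longrightarrow> is_val (Pair v w)"
| "is_val Unit"
| "is_val v \<Longrightarrow> is_val (Inj1 v)"
| "is_val v \<Longrightarrow> is_val (Inj2 v)"
| "is_exp t \<Longrightarrow> is_val (Lam x t)"
| "is_exp t \<Longrightarrow> is_exp u \<Longrightarrow> is_val (WPair t u)"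
| "is_val (Res n)"

fun fv :: "tm \<Rightarrow> vname set" where
  "fv (Var x) = {x}"
| "fv New = {}"
| "fv Delete = {}"
| "fv (Pair v w) = fv v \<union> fv w"
| "fv Unit = {}"
| "fv (Inj1 v) = fv v"
| "fv (Inj2 v) = fv v"
| "fv (Lam x t) = fv t - {x}"
| "fv (WPair t u) = fv t \<union> fv u"
| "fv (Res n) = {}"
| "fv (Let p x t u q) = fv t \<union> (fv u - {x})"
| "fv (DTens v x y t q) = fv v \<union> (fv t - {x, y})"
| "fv (DOne v t q) = fv v \<union> fv t"
| "fv (DSum v x t y u q) = fv v \<union> (fv t - {x}) \<union> (fv u - {y})"
| "fv (App v w q) = fv v \<union> fv w"
| "fv (Proj i v q) = fv v"

text \<open>A substitution is a partial map from variables to terms.  At a binder x we keep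
  the name x if it cannot capture anything, otherwise we rename it to a fresh name.\<close>

definition img :: "(vname \<Rightarrow> tm option) \<Rightarrow> vname \<Rightarrow> vname set" where
  "img m y = (case m y of Some u \<Rightarrow> fv u | None \<Rightarrow> {y})"

definition avoid :: "(vname \<Rightarrow> tm option) \<Rightarrow> tm \<Rightarrow> vname set \<Rightarrow> vname set" where
  "avoid m t X = (\<Union>y\<in>fv t - X. img m y)"

definition pick :: "vname set \<Rightarrow> vname \<Rightarrow> vname" where
  "pick S x = (if x \<notin> S then x else (LEAST n. n \<notin> S))"

fun substm :: "(vname \<Rightarrow> tm option) \<Rightarrow> tm \<Rightarrow> tm" where
  "substm m (Var y) = (case m y of Some u \<Rightarrow> u | None \<Rightarrow> Var y)"
| "substm m New = New"
| "substm m Delete = Delete"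
| "substm m (Pair v w) = Pair (substm m v) (substm m w)"
| "substm m Unit = Unit"
| "substm m (Inj1 v) = Inj1 (substm m v)"
| "substm m (Inj2 v) = Inj2 (substm m v)"
| "substm m (Lam x t) =
     (let z = pick (avoid m t {x}) x in Lam z (substm (m(x \<mapsto> Var z)) t))"
| "substm m (WPair t u) = WPair (substm m t) (substm m u)"
| "substm m (Res n) = Res n"
| "substm m (Let p x t u q) =
     (let z = pick (avoid m u {x}) x in Let p z (substm m t) (substm (m(x \<mapsto> Var z)) u) q)"
| "substm m (DTens v x y t q) =
     (let S = avoid m t {x, y}; z1 = pick S x; z2 = pick (insert z1 S) y
      in DTens (substm m v) z1 z2 (substm (m(x \<mapsto> Var z1, y \<mapsto> Var z2)) t) q)"
| "substm m (DOne v t q) = DOne (substm m v) (substm m t) q"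
| "substm m (DSum v x t y u q) =
     (let z1 = pick (avoid m t {x}) x; z2 = pick (avoid m u {y}) y
      in DSum (substm m v) z1 (substm (m(x \<mapsto> Var z1)) t) z2 (substm (m(y \<mapsto> Var z2)) u) q)"
| "substm m (App v w q) = App (substm m v) (substm m w) q"
| "substm m (Proj i v q) = Proj i (substm m v) q"

definition subst1 :: "tm \<Rightarrow> tm \<Rightarrow> vname \<Rightarrow> tm" where
  "subst1 t v x = substm [x \<mapsto> v] t"

definition subst2 :: "tm \<Rightarrow> tm \<Rightarrow> vname \<Rightarrow> tm \<Rightarrow> vname \<Rightarrow> tm" where
  "subst2 t v x w y = substm [x \<mapsto> v, y \<mapsto> w] t"

type_synonym ctx = "(vname \<times> ty) list"

definition dom_ctx :: "ctx \<Rightarrow> vname list" where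
  "dom_ctx \<Gamma> = map fst \<Gamma>"

inductive typing :: "ctx \<Rightarrow> tm \<Rightarrow> ty \<Rightarrow> bool" where
  t_var: "typing [(x, A)] (Var x) A"
| t_struct: "typing \<Gamma> t A \<Longrightarrow> distinct (dom_ctx \<Gamma>') \<Longrightarrow>
     mset (map (\<lambda>(y, B). (f y, B)) \<Gamma>) = mset \<Gamma>' \<Longrightarrow>
     typing \<Gamma>' (substm (\<lambda>y. if y \<in> set (dom_ctx \<Gamma>) then Some (Var (f y)) else None) t) A"
| t_new: "typing [] New (TLolli TOne (TPlus TR TOne))"
| t_delete: "typing [] Delete (TLolli TR TOne)"
| t_let: "typing \<Delta> t A \<Longrightarrow> typing (\<Gamma> @ [(x, A)]) u B \<Longrightarrow> distinct (dom_ctx (\<Gamma> @ \<Delta>)) \<Longrightarrow>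
     typing (\<Gamma> @ \<Delta>) (Let (polty A) x t u (polty B)) B"
| t_pair: "is_val v \<Longrightarrow> is_val w \<Longrightarrow> typing \<Gamma> v A \<Longrightarrow> typing \<Delta> w B \<Longrightarrow>
     distinct (dom_ctx (\<Gamma> @ \<Delta>)) \<Longrightarrow> typing (\<Gamma> @ \<Delta>) (Pair v w) (TTensor A B)"
| t_dtens: "is_val v \<Longrightarrow> typing \<Delta> v (TTensor A B) \<Longrightarrow>
     typing (\<Gamma> @ [(x, A), (y, B)] @ \<Gamma>') t C \<Longrightarrow> distinct (dom_ctx (\<Gamma> @ \<Delta> @ \<Gamma>')) \<Longrightarrow>
     typing (\<Gamma> @ \<Delta> @ \<Gamma>') (DTens v x y t (polty C)) C"
| t_unit: "typing [] Unit TOne"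
| t_done: "is_val v \<Longrightarrow> typing \<Delta> v TOne \<Longrightarrow> typing (\<Gamma> @ \<Gamma>') t A \<Longrightarrow>
     distinct (dom_ctx (\<Gamma> @ \<Delta> @ \<Gamma>')) \<Longrightarrow>
     typing (\<Gamma> @ \<Delta> @ \<Gamma>') (DOne v t (polty A)) A"
| t_inj1: "is_val v \<Longrightarrow> typing \<Gamma> v A \<Longrightarrow> typing \<Gamma> (Inj1 v) (TPlus A B)"
| t_inj2: "is_val v \<Longrightarrow> typing \<Gamma> v B \<Longrightarrow> typing \<Gamma> (Inj2 v) (TPlus A B)"
| t_dsum: "is_val v \<Longrightarrow> typing \<Delta> v (TPlus A B) \<Longrightarrow>
     typing (\<Gamma> @ [(x, A)] @ \<Gamma>') t C \<Longrightarrow> typing (\<Gamma> @ [(y, B)] @ \<Gamma>') u C \<Longrightarrow>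
     distinct (dom_ctx (\<Gamma> @ \<Delta> @ \<Gamma>')) \<Longrightarrow>
     typing (\<Gamma> @ \<Delta> @ \<Gamma>') (DSum v x t y u (polty C)) C"
| t_lam: "typing ((x, A) # \<Gamma>) t B \<Longrightarrow> typing \<Gamma> (Lam x t) (TLolli A B)"
| t_app: "is_val w \<Longrightarrow> is_val v \<Longrightarrow> typing \<Gamma> w A \<Longrightarrow> typing \<Delta> v (TLolli A B) \<Longrightarrow>
     distinct (dom_ctx (\<Gamma> @ \<Delta>)) \<Longrightarrow> typing (\<Gamma> @ \<Delta>) (App v w (polty B)) B"
| t_with: "typing \<Gamma> t A \<Longrightarrow> typing \<Gamma> u B \<Longrightarrow> typing \<Gamma> (WPair t u) (TWith A B)"
| t_proj1: "is_val v \<Longrightarrow> typing \<Gamma> v (TWith A1 A2) \<Longrightarrow> typing \<Gamma> (Proj 1 v (polty A1)) A1"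
| t_proj2: "is_val v \<Longrightarrow> typing \<Gamma> v (TWith A1 A2) \<Longrightarrow> typing \<Gamma> (Proj 2 v (polty A2)) A2"

datatype frame =
    FArg tm pol
  | FProj nat pol
  | FLet vname tm pol    (* (x^+.u)^eps *)

type_synonym stack = "frame list"   (* [] is the empty stack *)

text \<open>A resource r_n is represented by its index n; the freelist is a list of indices.
  A command <t | s | l>^eps is the tuple (t, s, l, eps).\<close>
type_synonym cmd = "tm \<times> stack \<times> nat list \<times> pol"

inductive step :: "cmd \<Rightarrow> cmd \<Rightarrow> bool" where
  s_letneg: "is_val v \<Longrightarrow> step (Let Neg x v t e, s, l, e) (subst1 t v x, s, l, e)"
| s_letpos: "step (Let Pos x t u e, s, l, e) (t, FLet x u e # s, l, Pos)"
| s_ret: "is_val v \<Longrightarrow> step (v, FLet x t e # s, l, Pos) (subst1 t v x, s, l, e)"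
| s_app: "is_val v \<Longrightarrow> is_val w \<Longrightarrow> step (App v w e, s, l, e) (v, FArg w e # s, l, Neg)"
| s_lam: "is_val v \<Longrightarrow> step (Lam x t, FArg v e # s, l, Neg) (subst1 t v x, s, l, e)"
| s_proj: "i \<in> {1,2} \<Longrightarrow> is_val v \<Longrightarrow> step (Proj i v e, s, l, e) (v, FProj i e # s, l, Neg)"
| s_with1: "step (WPair t1 t2, FProj 1 e # s, l, Neg) (t1, s, l, e)"
| s_with2: "step (WPair t1 t2, FProj 2 e # s, l, Neg) (t2, s, l, e)"
| s_tens: "is_val v \<Longrightarrow> is_val w \<Longrightarrow> step (DTens (Pair v w) x y t e, s, l, e) (subst2 t v x w y, s, l, e)"
| s_one: "step (DOne Unit t e, s, l, e) (t, s, l, e)"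
| s_sum1: "is_val v \<Longrightarrow> step (DSum (Inj1 v) x1 t1 x2 t2 e, s, l, e) (subst1 t1 v x1, s, l, e)"
| s_sum2: "is_val v \<Longrightarrow> step (DSum (Inj2 v) x1 t1 x2 t2 e, s, l, e) (subst1 t2 v x2, s, l, e)"
| s_new: "step (New, FArg Unit e # s, n # l, Neg) (Inj1 (Res n), s, l, Pos)"
| s_new_fail: "step (New, FArg Unit e # s, [], Neg) (Inj2 Unit, s, [], Pos)"
| s_delete: "step (Delete, FArg (Res n) e # s, l, Neg) (Unit, s, n # l, Pos)"

abbreviation steps :: "cmd \<Rightarrow> cmd \<Rightarrow> bool" where
  "steps \<equiv> step\<^sup>*\<^sup>*"

end

theory Submission
  imports Defs
begin

(* Annotate typing with the multiset of resource constants a term owns. By linearity the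
   annotations of the premises of a multiplicative rule add up, while & shares them, and the
   substitution lemma preserves the annotation when a value is substituted for a variable.
   Typing stacks in the same way, the resources owned by term, stack and freelist together are
   invariant under every machine step: new moves a resource from the freelist into the term and
   delete moves it back. Initially the closed program owns nothing; at the end the stack is empty
   and a value of central type owns nothing either, since central types are built from 1 by the
   positive connectives. So the final freelist has the same elements as the initial one. *)

(* Typing of L on finite-map contexts, extended to resource constants by rt_res. The rule
   (struct) is not included; it is admissible by rtyping_struct. *)
inductive rtyping :: "(vname \<rightharpoonup> ty) \<Rightarrow> nat multiset \<Rightarrow> tm \<Rightarrow> ty \<Rightarrow> bool" where
  rt_var: "rtyping [x \<mapsto> A] {#} (Var x) A"
| rt_res: "rtyping Map.empty {#n#} (Res n) TR"
| rt_new: "rtyping Map.empty {#} New (TLolli TOne (TPlus TR TOne))"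
| rt_delete: "rtyping Map.empty {#} Delete (TLolli TR TOne)"
| rt_unit: "rtyping Map.empty {#} Unit TOne"
| rt_let: "rtyping \<Delta> R1 t A \<Longrightarrow> rtyping (\<Gamma>(x \<mapsto> A)) R2 u B \<Longrightarrow> x \<notin> dom \<Gamma> \<Longrightarrow>
    dom \<Gamma> \<inter> dom \<Delta> = {} \<Longrightarrow> rtyping (\<Gamma> ++ \<Delta>) (R1 + R2) (Let (polty A) x t u (polty B)) B"
| rt_pair: "rtyping \<Gamma> R1 v A \<Longrightarrow> rtyping \<Delta> R2 w B \<Longrightarrow> dom \<Gamma> \<inter> dom \<Delta> = {} \<Longrightarrow>
    rtyping (\<Gamma> ++ \<Delta>) (R1 + R2) (Pair v w) (TTensor A B)"
| rt_dtens: "rtyping \<Delta> R1 v (TTensor A B) \<Longrightarrow> rtyping (\<Gamma>(x \<mapsto> A, y \<mapsto> B)) R2 t C \<Longrightarrow>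
    x \<notin> dom \<Gamma> \<Longrightarrow> y \<notin> dom \<Gamma> \<Longrightarrow> x \<noteq> y \<Longrightarrow> dom \<Gamma> \<inter> dom \<Delta> = {} \<Longrightarrow>
    rtyping (\<Gamma> ++ \<Delta>) (R1 + R2) (DTens v x y t (polty C)) C"
| rt_done: "rtyping \<Delta> R1 v TOne \<Longrightarrow> rtyping \<Gamma> R2 t A \<Longrightarrow> dom \<Gamma> \<inter> dom \<Delta> = {} \<Longrightarrow>
    rtyping (\<Gamma> ++ \<Delta>) (R1 + R2) (DOne v t (polty A)) A"
| rt_inj1: "rtyping \<Gamma> R v A \<Longrightarrow> rtyping \<Gamma> R (Inj1 v) (TPlus A B)"
| rt_inj2: "rtyping \<Gamma> R v B \<Longrightarrow> rtyping \<Gamma> R (Inj2 v) (TPlus A B)"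
| rt_dsum: "rtyping \<Delta> R1 v (TPlus A B) \<Longrightarrow> rtyping (\<Gamma>(x \<mapsto> A)) R2 t C \<Longrightarrow>
    rtyping (\<Gamma>(y \<mapsto> B)) R2 u C \<Longrightarrow> x \<notin> dom \<Gamma> \<Longrightarrow> y \<notin> dom \<Gamma> \<Longrightarrow> dom \<Gamma> \<inter> dom \<Delta> = {} \<Longrightarrow>
    rtyping (\<Gamma> ++ \<Delta>) (R1 + R2) (DSum v x t y u (polty C)) C"
| rt_lam: "rtyping (\<Gamma>(x \<mapsto> A)) R t B \<Longrightarrow> x \<notin> dom \<Gamma> \<Longrightarrow> rtyping \<Gamma> R (Lam x t) (TLolli A B)"
| rt_app: "rtyping \<Gamma> R1 w A \<Longrightarrow> rtyping \<Delta> R2 v (TLolli A B) \<Longrightarrow> dom \<Gamma> \<inter> dom \<Delta> = {} \<Longrightarrow>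
    rtyping (\<Gamma> ++ \<Delta>) (R1 + R2) (App v w (polty B)) B"
| rt_with: "rtyping \<Gamma> R t A \<Longrightarrow> rtyping \<Gamma> R u B \<Longrightarrow> rtyping \<Gamma> R (WPair t u) (TWith A B)"
| rt_proj1: "rtyping \<Gamma> R v (TWith A1 A2) \<Longrightarrow> rtyping \<Gamma> R (Proj 1 v (polty A1)) A1"
| rt_proj2: "rtyping \<Gamma> R v (TWith A1 A2) \<Longrightarrow> rtyping \<Gamma> R (Proj 2 v (polty A2)) A2"

lemma finite_fv: "finite (fv t)"
  by (induction t) auto

lemma rtyping_fv: "rtyping \<Gamma> R t A \<Longrightarrow> fv t = dom \<Gamma>"
  by (induction rule: rtyping.induct) (auto split: if_splits)

lemma rtyping_finite_dom: "rtyping \<Gamma> R t A \<Longrightarrow> finite (dom \<Gamma>)"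
  using rtyping_fv finite_fv by metis

definition subst_var :: "(vname \<Rightarrow> tm option) \<Rightarrow> vname \<Rightarrow> tm" where
  "subst_var m y = (case m y of Some u \<Rightarrow> u | None \<Rightarrow> Var y)"

lemma substm_Var: "substm m (Var y) = subst_var m y"
  by (simp add: subst_var_def)

lemma img_eq_fv_subst_var: "img m y = fv (subst_var m y)"
  by (cases "m y") (auto simp: img_def subst_var_def)

lemma finite_avoid: "finite (avoid m t X)"
  unfolding avoid_def img_eq_fv_subst_var by (simp add: finite_fv)

lemma pick_notin: "finite S \<Longrightarrow> pick S x \<notin> S"
  unfolding pick_def by (metis LeastI_ex ex_new_if_finite infinite_UNIV_nat)

(* The substitution m sends each y : A of \<Gamma> to a term of type A in its own context D y,
   owning the resources Rs y; G is the disjoint union of these contexts. *)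
definition subst_typed ::
    "(vname \<Rightarrow> tm option) \<Rightarrow> (vname \<rightharpoonup> ty) \<Rightarrow> (vname \<Rightarrow> vname \<rightharpoonup> ty) \<Rightarrow> (vname \<Rightarrow> nat multiset) \<Rightarrow> bool"
  where "subst_typed m \<Gamma> D Rs \<longleftrightarrow> (\<forall>y A. \<Gamma> y = Some A \<longrightarrow> rtyping (D y) (Rs y) (subst_var m y) A)"

definition ctx_union :: "(vname \<rightharpoonup> ty) \<Rightarrow> (vname \<Rightarrow> vname \<rightharpoonup> ty) \<Rightarrow> (vname \<rightharpoonup> ty) \<Rightarrow> bool" where
  "ctx_union \<Gamma> D G \<longleftrightarrow> dom G = (\<Union>y\<in>dom \<Gamma>. dom (D y)) \<and> (\<forall>y\<in>dom \<Gamma>. D y \<subseteq>\<^sub>m G) \<and>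
     disjoint_family_on (\<lambda>y. dom (D y)) (dom \<Gamma>)"

lemma dom_ctx_union_eq_avoid:
  assumes "subst_typed m \<Gamma> D Rs" "ctx_union \<Gamma> D G" "dom \<Gamma> = fv u - X"
  shows "dom G = avoid m u X"
proof -
  have "dom (D y) = img m y" if "y \<in> dom \<Gamma>" for y
  proof -
    from that obtain A where "\<Gamma> y = Some A" by blast
    then have "rtyping (D y) (Rs y) (subst_var m y) A"
      using assms(1) by (simp add: subst_typed_def)
    then show ?thesis by (simp add: rtyping_fv img_eq_fv_subst_var)
  qed
  then show ?thesis
    using assms(2,3) by (simp add: ctx_union_def avoid_def)
qed

lemma pick_avoid_notin_dom:
  assumes "subst_typed m \<Gamma> D Rs" "ctx_union \<Gamma> D G" "dom \<Gamma> = fv u - X"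
  shows "pick (avoid m u X) x \<notin> dom G"
  unfolding dom_ctx_union_eq_avoid[OF assms] by (rule pick_notin[OF finite_avoid])

lemma subst_typed_mono: "subst_typed m \<Gamma> D Rs \<Longrightarrow> \<Gamma>' \<subseteq>\<^sub>m \<Gamma> \<Longrightarrow> subst_typed m \<Gamma>' D Rs"
  unfolding subst_typed_def map_le_def by (metis domI)

lemma ctx_union_restrict:
  assumes "ctx_union \<Gamma> D G" "dom \<Gamma>' \<subseteq> dom \<Gamma>"
  shows "ctx_union \<Gamma>' D (G |` (\<Union>y\<in>dom \<Gamma>'. dom (D y)))"
  unfolding ctx_union_def
proof (intro conjI ballI)
  have "(\<Union>y\<in>dom \<Gamma>'. dom (D y)) \<subseteq> (\<Union>y\<in>dom \<Gamma>. dom (D y))"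
    by (rule UN_mono[OF assms(2)]) simp
  then have "(\<Union>y\<in>dom \<Gamma>'. dom (D y)) \<subseteq> dom G"
    using assms(1) by (simp add: ctx_union_def)
  then show "dom (G |` (\<Union>y\<in>dom \<Gamma>'. dom (D y))) = (\<Union>y\<in>dom \<Gamma>'. dom (D y))"
    by auto
  show "D y \<subseteq>\<^sub>m G |` (\<Union>y\<in>dom \<Gamma>'. dom (D y))" if "y \<in> dom \<Gamma>'" for y
  proof -
    have "D y \<subseteq>\<^sub>m G"
      using assms that unfolding ctx_union_def by blast
    moreover have "dom (D y) \<subseteq> (\<Union>y\<in>dom \<Gamma>'. dom (D y))"
      using that by blast
    ultimately show ?thesis
      unfolding map_le_def by (metis restrict_in subsetD)
  qed
  show "disjoint_family_on (\<lambda>y. dom (D y)) (dom \<Gamma>')"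
    using assms(1) by (intro disjoint_family_on_mono[OF assms(2)]) (simp add: ctx_union_def)
qed

lemma subst_split:
  assumes "subst_typed m (\<Gamma> ++ \<Delta>) D Rs" "ctx_union (\<Gamma> ++ \<Delta>) D G" "dom \<Gamma> \<inter> dom \<Delta> = {}"
    and "finite (dom \<Gamma>)" "finite (dom \<Delta>)"
  obtains G1 G2 where "G = G1 ++ G2" "dom G1 \<inter> dom G2 = {}"
    "subst_typed m \<Gamma> D Rs" "ctx_union \<Gamma> D G1" "subst_typed m \<Delta> D Rs" "ctx_union \<Delta> D G2"
    "sum Rs (dom (\<Gamma> ++ \<Delta>)) = sum Rs (dom \<Gamma>) + sum Rs (dom \<Delta>)"
proof -
  define S where "S \<Gamma> = (\<Union>y\<in>dom \<Gamma>. dom (D y))" for \<Gamma> :: "vname \<rightharpoonup> ty"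
  have dom_add: "dom (\<Gamma> ++ \<Delta>) = dom \<Gamma> \<union> dom \<Delta>"
    by auto
  have dom_G: "dom G = S \<Gamma> \<union> S \<Delta>"
    and disj: "disjoint_family_on (\<lambda>y. dom (D y)) (dom \<Gamma> \<union> dom \<Delta>)"
    using assms(2) unfolding ctx_union_def dom_add S_def by auto
  have "dom (D y) \<inter> dom (D y') = {}" if "y \<in> dom \<Gamma>" "y' \<in> dom \<Delta>" for y y'
  proof -
    have "y \<noteq> y'"
      using that assms(3) by auto
    then show ?thesis
      using disj that unfolding disjoint_family_on_def by auto
  qed
  then have S_disj: "S \<Gamma> \<inter> S \<Delta> = {}"
    unfolding S_def by auto
  have "G z = (G |` S \<Gamma> ++ G |` S \<Delta>) z" for z
    using dom_G by (cases "z \<in> S \<Delta>") (auto simp: map_add_def restrict_map_def split: option.split)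
  then have G_split: "G = G |` S \<Gamma> ++ G |` S \<Delta>" ..
  have le: "\<Gamma> \<subseteq>\<^sub>m \<Gamma> ++ \<Delta>" "\<Delta> \<subseteq>\<^sub>m \<Gamma> ++ \<Delta>"
    using assms(3) by (simp_all add: map_le_iff_map_add_commute map_add_comm)
  show thesis
  proof (rule that[OF G_split])
    show "dom (G |` S \<Gamma>) \<inter> dom (G |` S \<Delta>) = {}"
      using S_disj by auto
    show "subst_typed m \<Gamma> D Rs" "subst_typed m \<Delta> D Rs"
      by (rule subst_typed_mono[OF assms(1) le(1)], rule subst_typed_mono[OF assms(1) le(2)])
    show "ctx_union \<Gamma> D (G |` S \<Gamma>)" "ctx_union \<Delta> D (G |` S \<Delta>)"
      unfolding S_def by (rule ctx_union_restrict[OF assms(2)], simp)+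
    show "sum Rs (dom (\<Gamma> ++ \<Delta>)) = sum Rs (dom \<Gamma>) + sum Rs (dom \<Delta>)"
      using assms(3-5) dom_add by (simp add: sum.union_disjoint)
  qed
qed

lemma subst_bind:
  assumes "subst_typed m \<Gamma> D Rs" "ctx_union \<Gamma> D G" "x \<notin> dom \<Gamma>" "z \<notin> dom G"
  shows "subst_typed (m(x \<mapsto> Var z)) (\<Gamma>(x \<mapsto> A)) (D(x := [z \<mapsto> A])) (Rs(x := {#}))"
    and "ctx_union (\<Gamma>(x \<mapsto> A)) (D(x := [z \<mapsto> A])) (G(z \<mapsto> A))"
    and "sum (Rs(x := {#})) (dom (\<Gamma>(x \<mapsto> A))) = sum Rs (dom \<Gamma>)"
proof -
  show "subst_typed (m(x \<mapsto> Var z)) (\<Gamma>(x \<mapsto> A)) (D(x := [z \<mapsto> A])) (Rs(x := {#}))"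
    using assms(1) by (simp add: subst_typed_def subst_var_def rt_var)
  have z_fresh: "z \<notin> dom (D y)" if "y \<in> dom \<Gamma>" for y
    using assms(2,4) that unfolding ctx_union_def by blast
  have "(\<Union>y\<in>dom \<Gamma>. dom ((D(x := [z \<mapsto> A])) y)) = (\<Union>y\<in>dom \<Gamma>. dom (D y))"
    using assms(3) by (intro SUP_cong) auto
  then show "ctx_union (\<Gamma>(x \<mapsto> A)) (D(x := [z \<mapsto> A])) (G(z \<mapsto> A))"
    using assms(2,3) z_fresh
    by (auto simp: ctx_union_def disjoint_family_on_def map_le_def)
  show "sum (Rs(x := {#})) (dom (\<Gamma>(x \<mapsto> A))) = sum Rs (dom \<Gamma>)"
  proof (cases "finite (dom \<Gamma>)")
    case True
    have "sum (Rs(x := {#})) (dom \<Gamma>) = sum Rs (dom \<Gamma>)"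
      using assms(3) by (intro sum.cong) auto
    then show ?thesis
      using True assms(3) by simp
  qed simp
qed

lemma rtyping_substm:
  assumes "rtyping \<Gamma> R t A" "subst_typed m \<Gamma> D Rs" "ctx_union \<Gamma> D G"
  shows "rtyping G (R + sum Rs (dom \<Gamma>)) (substm m t) A"
  using assms
proof (induction arbitrary: m D Rs G rule: rtyping.induct)
  case (rt_var x A)
  have "D x \<subseteq>\<^sub>m G" "dom G = dom (D x)"
    using rt_var.prems(2) unfolding ctx_union_def by (auto simp: dom_def split: if_splits)
  then have "G = D x"
    by (intro map_le_antisym) (auto simp: map_le_def)
  moreover have "rtyping (D x) (Rs x) (subst_var m x) A"
    using rt_var.prems(1) by (simp add: subst_typed_def)
  moreover have "sum Rs (dom [x \<mapsto> A]) = Rs x"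
    by simp
  ultimately show ?case
    by (simp only: substm_Var add_0_left)
next
  case (rt_let \<Delta> R1 t A \<Gamma> x R2 u B)
  have fin: "finite (dom \<Gamma>)" "finite (dom \<Delta>)"
    using rtyping_finite_dom[OF rt_let.hyps(2)] rtyping_finite_dom[OF rt_let.hyps(1)] by simp_all
  obtain G1 G2 where G: "G = G1 ++ G2" "dom G1 \<inter> dom G2 = {}"
    and \<Gamma>: "subst_typed m \<Gamma> D Rs" "ctx_union \<Gamma> D G1"
    and \<Delta>: "subst_typed m \<Delta> D Rs" "ctx_union \<Delta> D G2"
    and sum: "sum Rs (dom (\<Gamma> ++ \<Delta>)) = sum Rs (dom \<Gamma>) + sum Rs (dom \<Delta>)"
    using subst_split[OF rt_let.prems rt_let.hyps(4) fin] .
  define z where "z = pick (avoid m u {x}) x"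
  have "dom \<Gamma> = fv u - {x}"
    using rtyping_fv[OF rt_let.hyps(2)] rt_let.hyps(3) by auto
  then have z: "z \<notin> dom G1"
    unfolding z_def by (rule pick_avoid_notin_dom[OF \<Gamma>])
  note bind = subst_bind[OF \<Gamma> rt_let.hyps(3) z, of A]
  have "rtyping (G1(z \<mapsto> A)) (R2 + sum Rs (dom \<Gamma>)) (substm (m(x \<mapsto> Var z)) u) B"
    using rt_let.IH(2)[OF bind(1,2)] by (simp only: bind(3))
  from rt_let.IH(1)[OF \<Delta>] this z G(2)
  have "rtyping (G1 ++ G2) ((R1 + sum Rs (dom \<Delta>)) + (R2 + sum Rs (dom \<Gamma>)))
      (Let (polty A) z (substm m t) (substm (m(x \<mapsto> Var z)) u) (polty B)) B"
    by (rule rtyping.rt_let)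
  then show ?case
    using G(1) sum by (simp add: z_def Let_def ac_simps)
next
  case (rt_pair \<Gamma> R1 v A \<Delta> R2 w B)
  have fin: "finite (dom \<Gamma>)" "finite (dom \<Delta>)"
    using rtyping_finite_dom[OF rt_pair.hyps(1)] rtyping_finite_dom[OF rt_pair.hyps(2)] .
  obtain G1 G2 where G: "G = G1 ++ G2" "dom G1 \<inter> dom G2 = {}"
    and \<Gamma>: "subst_typed m \<Gamma> D Rs" "ctx_union \<Gamma> D G1"
    and \<Delta>: "subst_typed m \<Delta> D Rs" "ctx_union \<Delta> D G2"
    and sum: "sum Rs (dom (\<Gamma> ++ \<Delta>)) = sum Rs (dom \<Gamma>) + sum Rs (dom \<Delta>)"
    using subst_split[OF rt_pair.prems rt_pair.hyps(3) fin] .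
  from rt_pair.IH(1)[OF \<Gamma>] rt_pair.IH(2)[OF \<Delta>] G(2)
  have "rtyping (G1 ++ G2) ((R1 + sum Rs (dom \<Gamma>)) + (R2 + sum Rs (dom \<Delta>)))
      (Pair (substm m v) (substm m w)) (TTensor A B)"
    by (rule rtyping.rt_pair)
  then show ?case
    using G(1) sum by (simp add: ac_simps)
next
  case (rt_dtens \<Delta> R1 v A B \<Gamma> x y R2 t C)
  have fin: "finite (dom \<Gamma>)" "finite (dom \<Delta>)"
    using rtyping_finite_dom[OF rt_dtens.hyps(2)] rtyping_finite_dom[OF rt_dtens.hyps(1)] by simp_all
  obtain G1 G2 where G: "G = G1 ++ G2" "dom G1 \<inter> dom G2 = {}"
    and \<Gamma>: "subst_typed m \<Gamma> D Rs" "ctx_union \<Gamma> D G1"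
    and \<Delta>: "subst_typed m \<Delta> D Rs" "ctx_union \<Delta> D G2"
    and sum: "sum Rs (dom (\<Gamma> ++ \<Delta>)) = sum Rs (dom \<Gamma>) + sum Rs (dom \<Delta>)"
    using subst_split[OF rt_dtens.prems rt_dtens.hyps(6) fin] .
  define S where "S = avoid m t {x, y}"
  define z1 where "z1 = pick S x"
  define z2 where "z2 = pick (insert z1 S) y"
  have "dom \<Gamma> = fv t - {x, y}"
    using rtyping_fv[OF rt_dtens.hyps(2)] rt_dtens.hyps(3,4) by auto
  then have dom_G1: "dom G1 = S"
    unfolding S_def by (rule dom_ctx_union_eq_avoid[OF \<Gamma>])
  have z1: "z1 \<notin> dom G1"
    unfolding z1_def dom_G1 S_def by (rule pick_notin[OF finite_avoid])
  have z2: "z2 \<notin> insert z1 (dom G1)"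
    unfolding z2_def dom_G1 S_def by (rule pick_notin) (simp add: finite_avoid)
  note bind1 = subst_bind[OF \<Gamma> rt_dtens.hyps(3) z1, of A]
  have y: "y \<notin> dom (\<Gamma>(x \<mapsto> A))"
    using rt_dtens.hyps(4,5) by simp
  have z2_fresh: "z2 \<notin> dom (G1(z1 \<mapsto> A))"
    using z2 by simp
  note bind2 = subst_bind[OF bind1(1,2) y z2_fresh, of B]
  have "rtyping (G1(z1 \<mapsto> A, z2 \<mapsto> B)) (R2 + sum Rs (dom \<Gamma>))
      (substm (m(x \<mapsto> Var z1, y \<mapsto> Var z2)) t) C"
    using rt_dtens.IH(2)[OF bind2(1,2)] by (simp only: bind2(3) bind1(3))
  from rt_dtens.IH(1)[OF \<Delta>] this z1 _ _ G(2)
  have "rtyping (G1 ++ G2) ((R1 + sum Rs (dom \<Delta>)) + (R2 + sum Rs (dom \<Gamma>)))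
      (DTens (substm m v) z1 z2 (substm (m(x \<mapsto> Var z1, y \<mapsto> Var z2)) t) (polty C)) C"
    by (rule rtyping.rt_dtens) (use z2 in auto)
  then show ?case
    using G(1) sum by (simp add: z1_def z2_def S_def Let_def ac_simps)
next
  case (rt_done \<Delta> R1 v \<Gamma> R2 t A)
  have fin: "finite (dom \<Gamma>)" "finite (dom \<Delta>)"
    using rtyping_finite_dom[OF rt_done.hyps(2)] rtyping_finite_dom[OF rt_done.hyps(1)] .
  obtain G1 G2 where G: "G = G1 ++ G2" "dom G1 \<inter> dom G2 = {}"
    and \<Gamma>: "subst_typed m \<Gamma> D Rs" "ctx_union \<Gamma> D G1"
    and \<Delta>: "subst_typed m \<Delta> D Rs" "ctx_union \<Delta> D G2"
    and sum: "sum Rs (dom (\<Gamma> ++ \<Delta>)) = sum Rs (dom \<Gamma>) + sum Rs (dom \<Delta>)"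
    using subst_split[OF rt_done.prems rt_done.hyps(3) fin] .
  from rt_done.IH(1)[OF \<Delta>] rt_done.IH(2)[OF \<Gamma>] G(2)
  have "rtyping (G1 ++ G2) ((R1 + sum Rs (dom \<Delta>)) + (R2 + sum Rs (dom \<Gamma>)))
      (DOne (substm m v) (substm m t) (polty A)) A"
    by (rule rtyping.rt_done)
  then show ?case
    using G(1) sum by (simp add: ac_simps)
next
  case (rt_dsum \<Delta> R1 v A B \<Gamma> x R2 t C y u)
  have fin: "finite (dom \<Gamma>)" "finite (dom \<Delta>)"
    using rtyping_finite_dom[OF rt_dsum.hyps(2)] rtyping_finite_dom[OF rt_dsum.hyps(1)] by simp_all
  obtain G1 G2 where G: "G = G1 ++ G2" "dom G1 \<inter> dom G2 = {}"
    and \<Gamma>: "subst_typed m \<Gamma> D Rs" "ctx_union \<Gamma> D G1"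
    and \<Delta>: "subst_typed m \<Delta> D Rs" "ctx_union \<Delta> D G2"
    and sum: "sum Rs (dom (\<Gamma> ++ \<Delta>)) = sum Rs (dom \<Gamma>) + sum Rs (dom \<Delta>)"
    using subst_split[OF rt_dsum.prems rt_dsum.hyps(6) fin] .
  define z1 where "z1 = pick (avoid m t {x}) x"
  define z2 where "z2 = pick (avoid m u {y}) y"
  have fv_t: "dom \<Gamma> = fv t - {x}" and fv_u: "dom \<Gamma> = fv u - {y}"
    using rtyping_fv[OF rt_dsum.hyps(2)] rtyping_fv[OF rt_dsum.hyps(3)] rt_dsum.hyps(4,5) by auto
  have z1: "z1 \<notin> dom G1" and z2: "z2 \<notin> dom G1"
    unfolding z1_def z2_def
    by (rule pick_avoid_notin_dom[OF \<Gamma> fv_t], rule pick_avoid_notin_dom[OF \<Gamma> fv_u])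
  note bind1 = subst_bind[OF \<Gamma> rt_dsum.hyps(4) z1, of A]
  note bind2 = subst_bind[OF \<Gamma> rt_dsum.hyps(5) z2, of B]
  have "rtyping (G1(z1 \<mapsto> A)) (R2 + sum Rs (dom \<Gamma>)) (substm (m(x \<mapsto> Var z1)) t) C"
    using rt_dsum.IH(2)[OF bind1(1,2)] by (simp only: bind1(3))
  moreover have "rtyping (G1(z2 \<mapsto> B)) (R2 + sum Rs (dom \<Gamma>)) (substm (m(y \<mapsto> Var z2)) u) C"
    using rt_dsum.IH(3)[OF bind2(1,2)] by (simp only: bind2(3))
  ultimately have "rtyping (G1 ++ G2) ((R1 + sum Rs (dom \<Delta>)) + (R2 + sum Rs (dom \<Gamma>)))
      (DSum (substm m v) z1 (substm (m(x \<mapsto> Var z1)) t) z2 (substm (m(y \<mapsto> Var z2)) u) (polty C)) C"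
    using rt_dsum.IH(1)[OF \<Delta>] z1 z2 G(2) by (intro rtyping.rt_dsum)
  then show ?case
    using G(1) sum by (simp add: z1_def z2_def Let_def ac_simps)
next
  case (rt_lam \<Gamma> x A R t B)
  define z where "z = pick (avoid m t {x}) x"
  have "dom \<Gamma> = fv t - {x}"
    using rtyping_fv[OF rt_lam.hyps(1)] rt_lam.hyps(2) by auto
  then have z: "z \<notin> dom G"
    unfolding z_def by (rule pick_avoid_notin_dom[OF rt_lam.prems])
  note bind = subst_bind[OF rt_lam.prems rt_lam.hyps(2) z, of A]
  have "rtyping (G(z \<mapsto> A)) (R + sum Rs (dom \<Gamma>)) (substm (m(x \<mapsto> Var z)) t) B"
    using rt_lam.IH[OF bind(1,2)] by (simp only: bind(3))
  then show ?case
    using z by (simp add: z_def Let_def rtyping.rt_lam)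
next
  case (rt_app \<Gamma> R1 w A \<Delta> R2 v B)
  have fin: "finite (dom \<Gamma>)" "finite (dom \<Delta>)"
    using rtyping_finite_dom[OF rt_app.hyps(1)] rtyping_finite_dom[OF rt_app.hyps(2)] .
  obtain G1 G2 where G: "G = G1 ++ G2" "dom G1 \<inter> dom G2 = {}"
    and \<Gamma>: "subst_typed m \<Gamma> D Rs" "ctx_union \<Gamma> D G1"
    and \<Delta>: "subst_typed m \<Delta> D Rs" "ctx_union \<Delta> D G2"
    and sum: "sum Rs (dom (\<Gamma> ++ \<Delta>)) = sum Rs (dom \<Gamma>) + sum Rs (dom \<Delta>)"
    using subst_split[OF rt_app.prems rt_app.hyps(3) fin] .
  from rt_app.IH(1)[OF \<Gamma>] rt_app.IH(2)[OF \<Delta>] G(2)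
  have "rtyping (G1 ++ G2) ((R1 + sum Rs (dom \<Gamma>)) + (R2 + sum Rs (dom \<Delta>)))
      (App (substm m v) (substm m w) (polty B)) B"
    by (rule rtyping.rt_app)
  then show ?case
    using G(1) sum by (simp add: ac_simps)
next
  case (rt_proj1 \<Gamma> R v A1 A2)
  from rt_proj1.IH[OF rt_proj1.prems] show ?case
    unfolding substm.simps by (rule rtyping.rt_proj1)
next
  case (rt_proj2 \<Gamma> R v A1 A2)
  from rt_proj2.IH[OF rt_proj2.prems] show ?case
    unfolding substm.simps by (rule rtyping.rt_proj2)
qed (auto simp: ctx_union_def intro: rtyping.intros)

lemma rtyping_subst1:
  assumes "rtyping Map.empty Rv v A" "rtyping [x \<mapsto> A] Ru u B"
  shows "rtyping Map.empty (Rv + Ru) (subst1 u v x) B"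
proof -
  have "subst_typed [x \<mapsto> v] [x \<mapsto> A] (\<lambda>_. Map.empty) (\<lambda>_. Rv)"
    using assms(1) by (simp add: subst_typed_def subst_var_def)
  moreover have "ctx_union [x \<mapsto> A] (\<lambda>_. Map.empty) Map.empty"
    by (simp add: ctx_union_def disjoint_family_on_def)
  ultimately have "rtyping Map.empty (Ru + sum (\<lambda>_. Rv) (dom [x \<mapsto> A])) (substm [x \<mapsto> v] u) B"
    by (rule rtyping_substm[OF assms(2)])
  then show ?thesis
    by (simp add: subst1_def add.commute)
qed

lemma rtyping_subst2:
  assumes "rtyping Map.empty Rv v A" "rtyping Map.empty Rw w B"
    and "rtyping [x \<mapsto> A, y \<mapsto> B] Rt t C" "x \<noteq> y"
  shows "rtyping Map.empty (Rv + Rw + Rt) (subst2 t v x w y) C"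
proof -
  define Rs where "Rs = (\<lambda>_. Rw)(x := Rv)"
  have "subst_typed [x \<mapsto> v, y \<mapsto> w] [x \<mapsto> A, y \<mapsto> B] (\<lambda>_. Map.empty) Rs"
    using assms by (simp add: subst_typed_def subst_var_def Rs_def)
  moreover have "ctx_union [x \<mapsto> A, y \<mapsto> B] (\<lambda>_. Map.empty) Map.empty"
    by (simp add: ctx_union_def disjoint_family_on_def)
  ultimately have "rtyping Map.empty (Rt + sum Rs (dom [x \<mapsto> A, y \<mapsto> B])) (substm [x \<mapsto> v, y \<mapsto> w] t) C"
    by (rule rtyping_substm[OF assms(3)])
  then show ?thesis
    using assms(4) by (simp add: subst2_def Rs_def ac_simps)
qed

lemma rtyping_struct:
  assumes "rtyping (map_of \<Gamma>) R t A" "distinct (dom_ctx \<Gamma>')"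
    and "mset (map (\<lambda>(y, B). (f y, B)) \<Gamma>) = mset \<Gamma>'"
  shows "rtyping (map_of \<Gamma>') R (substm (\<lambda>y. if y \<in> set (dom_ctx \<Gamma>) then Some (Var (f y)) else None) t) A"
proof -
  define m where "m = (\<lambda>y. if y \<in> set (dom_ctx \<Gamma>) then Some (Var (f y)) else None)"
  define D where "D = (\<lambda>y. [f y \<mapsto> the (map_of \<Gamma> y)])"
  have distinct: "distinct (map fst \<Gamma>')"
    using assms(2) by (simp add: dom_ctx_def)
  have set_\<Gamma>': "set \<Gamma>' = (\<lambda>(y, B). (f y, B)) ` set \<Gamma>"
    using arg_cong[OF assms(3), of set_mset] by simp
  have "map fst (map (\<lambda>(y, B). (f y, B)) \<Gamma>) = map f (map fst \<Gamma>)"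
    by auto
  then have "mset (map fst \<Gamma>') = mset (map f (map fst \<Gamma>))"
    using assms(3) by (metis mset_map)
  then have "distinct (map f (map fst \<Gamma>))"
    using distinct mset_eq_imp_distinct_iff by blast
  then have inj: "inj_on f (fst ` set \<Gamma>)"
    unfolding distinct_map by simp
  have lookup: "map_of \<Gamma>' (f y) = Some B" if "map_of \<Gamma> y = Some B" for y B
    using map_of_SomeD[OF that] distinct set_\<Gamma>' by force
  have "subst_typed m (map_of \<Gamma>) D (\<lambda>_. {#})"
    unfolding subst_typed_def
  proof (intro allI impI)
    fix y B
    assume y: "map_of \<Gamma> y = Some B"
    then have "y \<in> set (dom_ctx \<Gamma>)"
      by (force simp: dom_ctx_def dest: map_of_SomeD)
    then show "rtyping (D y) {#} (subst_var m y) B"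
      using y by (simp add: m_def D_def subst_var_def rt_var)
  qed
  moreover have "ctx_union (map_of \<Gamma>) D (map_of \<Gamma>')"
    unfolding ctx_union_def
  proof (intro conjI ballI)
    show "dom (map_of \<Gamma>') = (\<Union>y\<in>dom (map_of \<Gamma>). dom (D y))"
      using set_\<Gamma>' by (force simp: D_def dom_map_of_conv_image_fst)
    show "D y \<subseteq>\<^sub>m map_of \<Gamma>'" if "y \<in> dom (map_of \<Gamma>)" for y
      using that lookup by (auto simp: D_def map_le_def)
    show "disjoint_family_on (\<lambda>y. dom (D y)) (dom (map_of \<Gamma>))"
      using inj by (auto simp: disjoint_family_on_def D_def inj_on_def dom_map_of_conv_image_fst)
  qed
  ultimately have "rtyping (map_of \<Gamma>') (R + sum (\<lambda>_. {#}) (dom (map_of \<Gamma>))) (substm m t) A"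
    by (rule rtyping_substm[OF assms(1)])
  then show ?thesis
    by (simp add: m_def)
qed

lemma map_of_append_middle:
  assumes "distinct (map fst (\<Gamma> @ \<Delta> @ \<Gamma>'))"
  shows "map_of (\<Gamma> @ \<Delta> @ \<Gamma>') = map_of (\<Gamma> @ \<Gamma>') ++ map_of \<Delta>"
proof -
  have "map_of (\<Gamma> @ \<Delta> @ \<Gamma>') = map_of ((\<Gamma> @ \<Gamma>') @ \<Delta>)"
    using assms by (subst map_of_inject_set) auto
  also have "\<dots> = map_of \<Delta> ++ map_of (\<Gamma> @ \<Gamma>')"
    by (rule map_of_append)
  also have "\<dots> = map_of (\<Gamma> @ \<Gamma>') ++ map_of \<Delta>"
    using assms by (intro map_add_comm) (auto simp: dom_map_of_conv_image_fst)
  finally show ?thesis .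
qed

lemma typing_rtyping: "typing \<Gamma> t A \<Longrightarrow> distinct (dom_ctx \<Gamma>) \<and> rtyping (map_of \<Gamma>) {#} t A"
proof (induction rule: typing.induct)
  case (t_var x A)
  have "map_of [(x, A)] = [x \<mapsto> A]" "distinct (dom_ctx [(x, A)])"
    by (simp_all add: dom_ctx_def)
  then show ?case
    using rt_var by metis
next
  case (t_struct \<Gamma> t A \<Gamma>' f)
  then show ?case
    using rtyping_struct by blast
next
  case (t_let \<Delta> t A \<Gamma> x u B)
  have "map_of (\<Gamma> @ [(x, A)]) = (map_of \<Gamma>)(x \<mapsto> A)" and x: "x \<notin> dom (map_of \<Gamma>)"
    using t_let.IH(2) map_of_append_middle[of \<Gamma> "[(x, A)]" "[]"]
    by (auto simp: dom_ctx_def dom_map_of_conv_image_fst)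
  then have u: "rtyping ((map_of \<Gamma>)(x \<mapsto> A)) {#} u B"
    using t_let.IH(2) by metis
  have disj: "dom (map_of \<Gamma>) \<inter> dom (map_of \<Delta>) = {}"
    using t_let.hyps(3) by (auto simp: dom_ctx_def dom_map_of_conv_image_fst)
  have "rtyping (map_of \<Gamma> ++ map_of \<Delta>) ({#} + {#}) (Let (polty A) x t u (polty B)) B"
    using t_let.IH(1) u x disj by (blast intro: rtyping.rt_let)
  then show ?case
    using t_let.hyps(3) map_of_append_middle[of \<Gamma> \<Delta> "[]"] by (simp add: dom_ctx_def)
next
  case (t_pair v w \<Gamma> A \<Delta> B)
  then have "rtyping (map_of \<Gamma> ++ map_of \<Delta>) ({#} + {#}) (Pair v w) (TTensor A B)"
    by (intro rtyping.rt_pair) (auto simp: dom_ctx_def dom_map_of_conv_image_fst)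
  then show ?case
    using t_pair.hyps(5) map_of_append_middle[of \<Gamma> \<Delta> "[]"] by (simp add: dom_ctx_def)
next
  case (t_dtens v \<Delta> A B \<Gamma> x y \<Gamma>' t C)
  have "map_of (\<Gamma> @ [(x, A), (y, B)] @ \<Gamma>') = (map_of (\<Gamma> @ \<Gamma>'))(x \<mapsto> A, y \<mapsto> B)"
    and xy: "x \<notin> dom (map_of (\<Gamma> @ \<Gamma>'))" "y \<notin> dom (map_of (\<Gamma> @ \<Gamma>'))" "x \<noteq> y"
    using t_dtens.IH(2) map_of_append_middle[of \<Gamma> "[(x, A), (y, B)]" \<Gamma>']
    by (auto simp: dom_ctx_def dom_map_of_conv_image_fst fun_upd_twist)
  then have t: "rtyping ((map_of (\<Gamma> @ \<Gamma>'))(x \<mapsto> A, y \<mapsto> B)) {#} t C"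
    using t_dtens.IH(2) by metis
  have disj: "dom (map_of (\<Gamma> @ \<Gamma>')) \<inter> dom (map_of \<Delta>) = {}"
    using t_dtens.hyps(4) by (auto simp: dom_ctx_def dom_map_of_conv_image_fst)
  have "rtyping (map_of (\<Gamma> @ \<Gamma>') ++ map_of \<Delta>) ({#} + {#}) (DTens v x y t (polty C)) C"
    using t_dtens.IH(1) t xy disj by (blast intro: rtyping.rt_dtens)
  then show ?case
    using t_dtens.hyps(4) map_of_append_middle[of \<Gamma> \<Delta> \<Gamma>'] by (simp add: dom_ctx_def)
next
  case (t_done v \<Delta> \<Gamma> \<Gamma>' t A)
  then have "rtyping (map_of (\<Gamma> @ \<Gamma>') ++ map_of \<Delta>) ({#} + {#}) (DOne v t (polty A)) A"
    by (intro rtyping.rt_done) (auto simp: dom_ctx_def dom_map_of_conv_image_fst)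
  then show ?case
    using t_done.hyps(4) map_of_append_middle[of \<Gamma> \<Delta> \<Gamma>'] by (simp add: dom_ctx_def)
next
  case (t_dsum v \<Delta> A B \<Gamma> x \<Gamma>' t C y u)
  have "map_of (\<Gamma> @ [(x, A)] @ \<Gamma>') = (map_of (\<Gamma> @ \<Gamma>'))(x \<mapsto> A)" "x \<notin> dom (map_of (\<Gamma> @ \<Gamma>'))"
    and "map_of (\<Gamma> @ [(y, B)] @ \<Gamma>') = (map_of (\<Gamma> @ \<Gamma>'))(y \<mapsto> B)" "y \<notin> dom (map_of (\<Gamma> @ \<Gamma>'))"
    using t_dsum.IH(2,3) map_of_append_middle[of \<Gamma> "[(x, A)]" \<Gamma>'] map_of_append_middle[of \<Gamma> "[(y, B)]" \<Gamma>']
    by (auto simp: dom_ctx_def dom_map_of_conv_image_fst)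
  moreover have "dom (map_of (\<Gamma> @ \<Gamma>')) \<inter> dom (map_of \<Delta>) = {}"
    using t_dsum.hyps(5) by (auto simp: dom_ctx_def dom_map_of_conv_image_fst)
  ultimately have "rtyping (map_of (\<Gamma> @ \<Gamma>') ++ map_of \<Delta>) ({#} + {#}) (DSum v x t y u (polty C)) C"
    using t_dsum.IH by (metis rtyping.rt_dsum)
  then show ?case
    using t_dsum.hyps(5) map_of_append_middle[of \<Gamma> \<Delta> \<Gamma>'] by (simp add: dom_ctx_def)
next
  case (t_lam x A \<Gamma> t B)
  have t: "rtyping ((map_of \<Gamma>)(x \<mapsto> A)) {#} t B"
    using t_lam.IH by (simp only: map_of.simps fst_conv snd_conv)
  have "x \<notin> dom (map_of \<Gamma>)" "distinct (dom_ctx \<Gamma>)"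
    using t_lam.IH by (auto simp: dom_ctx_def dom_map_of_conv_image_fst)
  then show ?case
    using rtyping.rt_lam[OF t] by blast
next
  case (t_app w v \<Gamma> A \<Delta> B)
  then have "rtyping (map_of \<Gamma> ++ map_of \<Delta>) ({#} + {#}) (App v w (polty B)) B"
    by (intro rtyping.rt_app) (auto simp: dom_ctx_def dom_map_of_conv_image_fst)
  then show ?case
    using t_app.hyps(5) map_of_append_middle[of \<Gamma> \<Delta> "[]"] by (simp add: dom_ctx_def)
next
  case (t_proj1 v \<Gamma> A1 A2)
  then show ?case
    using rtyping.rt_proj1 by blast
qed (auto simp: dom_ctx_def intro: rtyping.intros)

inductive stack_typing :: "ty \<Rightarrow> stack \<Rightarrow> ty \<Rightarrow> nat multiset \<Rightarrow> bool" for W where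
  st_nil: "stack_typing W [] W {#}"
| st_arg: "rtyping Map.empty R1 w A \<Longrightarrow> stack_typing W s B R2 \<Longrightarrow>
    stack_typing W (FArg w e # s) (TLolli A B) (R1 + R2)"
| st_proj1: "stack_typing W s A1 R \<Longrightarrow> stack_typing W (FProj 1 e # s) (TWith A1 A2) R"
| st_proj2: "stack_typing W s A2 R \<Longrightarrow> stack_typing W (FProj 2 e # s) (TWith A1 A2) R"
| st_let: "rtyping [x \<mapsto> A] R1 u B \<Longrightarrow> stack_typing W s B R2 \<Longrightarrow>
    stack_typing W (FLet x u e # s) A (R1 + R2)"

inductive_cases stack_typing_NilE: "stack_typing W [] A R"
inductive_cases stack_typing_ArgE: "stack_typing W (FArg w e # s) T R"
inductive_cases stack_typing_ProjE: "stack_typing W (FProj i e # s) T R"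
inductive_cases stack_typing_LetE: "stack_typing W (FLet x u e # s) A R"

definition cmd_typed :: "ty \<Rightarrow> nat multiset \<Rightarrow> cmd \<Rightarrow> bool" where
  "cmd_typed W M c \<longleftrightarrow> (case c of (t, s, l, _) \<Rightarrow>
     \<exists>A R1 R2. rtyping Map.empty R1 t A \<and> stack_typing W s A R2 \<and> R1 + R2 + mset l = M)"

lemma cmd_typedI:
  "rtyping Map.empty R1 t A \<Longrightarrow> stack_typing W s A R2 \<Longrightarrow> R1 + R2 + mset l = M \<Longrightarrow>
    cmd_typed W M (t, s, l, e)"
  unfolding cmd_typed_def by auto

lemma cmd_typedE:
  assumes "cmd_typed W M (t, s, l, e)"
  obtains A R1 R2 where "rtyping Map.empty R1 t A" "stack_typing W s A R2" "R1 + R2 + mset l = M"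
  using assms unfolding cmd_typed_def by auto

lemma cmd_typed_head_step:
  assumes "cmd_typed W M (t, s, l, e)"
    and "\<And>R A. rtyping Map.empty R t A \<Longrightarrow> rtyping Map.empty R t' A"
  shows "cmd_typed W M (t', s, l, e')"
  using assms by (auto elim!: cmd_typedE intro: cmd_typedI)

inductive_cases rtyping_LetE: "rtyping \<Gamma> R (Let p x t u q) B"
inductive_cases rtyping_AppE: "rtyping \<Gamma> R (App v w q) B"
inductive_cases rtyping_LamE: "rtyping \<Gamma> R (Lam x t) T"
inductive_cases rtyping_ProjE: "rtyping \<Gamma> R (Proj i v q) T"
inductive_cases rtyping_WPairE: "rtyping \<Gamma> R (WPair t u) T"
inductive_cases rtyping_DTensE: "rtyping \<Gamma> R (DTens v x y t q) C"
inductive_cases rtyping_PairE: "rtyping \<Gamma> R (Pair v w) T"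
inductive_cases rtyping_DOneE: "rtyping \<Gamma> R (DOne v t q) A"
inductive_cases rtyping_UnitE: "rtyping \<Gamma> R Unit T"
inductive_cases rtyping_DSumE: "rtyping \<Gamma> R (DSum v x t y u q) C"
inductive_cases rtyping_Inj1E: "rtyping \<Gamma> R (Inj1 v) T"
inductive_cases rtyping_Inj2E: "rtyping \<Gamma> R (Inj2 v) T"
inductive_cases rtyping_NewE: "rtyping \<Gamma> R New T"
inductive_cases rtyping_DeleteE: "rtyping \<Gamma> R Delete T"
inductive_cases rtyping_ResE: "rtyping \<Gamma> R (Res n) T"

lemma rtyping_contract:
  "rtyping Map.empty R (Let Neg x v t e) A \<Longrightarrow> rtyping Map.empty R (subst1 t v x) A"
  "rtyping Map.empty R (DTens (Pair v w) x y t e) A \<Longrightarrow> rtyping Map.empty R (subst2 t v x w y) A"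
  "rtyping Map.empty R (DOne Unit t e) A \<Longrightarrow> rtyping Map.empty R t A"
  "rtyping Map.empty R (DSum (Inj1 v) x1 t1 x2 t2 e) A \<Longrightarrow> rtyping Map.empty R (subst1 t1 v x1) A"
  "rtyping Map.empty R (DSum (Inj2 v) x1 t1 x2 t2 e) A \<Longrightarrow> rtyping Map.empty R (subst1 t2 v x2) A"
  by (auto elim!: rtyping_LetE rtyping_DTensE rtyping_PairE rtyping_DOneE rtyping_UnitE
      rtyping_DSumE rtyping_Inj1E rtyping_Inj2E intro: rtyping_subst1 rtyping_subst2)

lemma cmd_typed_step:
  assumes "step c c'" "cmd_typed W M c"
  shows "cmd_typed W M c'"
  using assms
proof (induction rule: step.induct)
  case s_letneg
  from s_letneg.prems show ?case
    by (rule cmd_typed_head_step) (rule rtyping_contract)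
next
  case s_letpos
  then show ?case
    by (auto elim!: cmd_typedE rtyping_LetE intro!: cmd_typedI st_let simp: ac_simps)
next
  case s_ret
  then show ?case
    by (auto elim!: cmd_typedE stack_typing_LetE intro!: cmd_typedI rtyping_subst1 simp: ac_simps)
next
  case s_app
  then show ?case
    by (auto elim!: cmd_typedE rtyping_AppE intro!: cmd_typedI st_arg simp: ac_simps)
next
  case s_lam
  then show ?case
    by (auto elim!: cmd_typedE rtyping_LamE stack_typing_ArgE intro!: cmd_typedI rtyping_subst1
        simp: ac_simps)
next
  case s_proj
  then show ?case
    \<comment> \<open>rtyping_ProjE states the index 1 as Suc 0\<close>
    by (auto elim!: cmd_typedE rtyping_ProjE intro!: cmd_typedI st_proj1[unfolded One_nat_def] st_proj2)
next
  case s_with1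
  then show ?case
    by (auto elim!: cmd_typedE rtyping_WPairE stack_typing_ProjE intro!: cmd_typedI)
next
  case s_with2
  then show ?case
    by (auto elim!: cmd_typedE rtyping_WPairE stack_typing_ProjE intro!: cmd_typedI)
next
  case s_tens
  from s_tens.prems show ?case
    by (rule cmd_typed_head_step) (rule rtyping_contract)
next
  case s_one
  from s_one.prems show ?case
    by (rule cmd_typed_head_step) (rule rtyping_contract)
next
  case s_sum1
  from s_sum1.prems show ?case
    by (rule cmd_typed_head_step) (rule rtyping_contract)
next
  case s_sum2
  from s_sum2.prems show ?case
    by (rule cmd_typed_head_step) (rule rtyping_contract)
next
  case s_new
  then show ?case
    by (auto elim!: cmd_typedE rtyping_NewE stack_typing_ArgE rtyping_UnitE
        intro!: cmd_typedI rt_inj1 rt_res)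
next
  case s_new_fail
  then show ?case
    by (auto elim!: cmd_typedE rtyping_NewE stack_typing_ArgE rtyping_UnitE
        intro!: cmd_typedI rt_inj2 rt_unit)
next
  case s_delete
  then show ?case
    by (auto elim!: cmd_typedE rtyping_DeleteE stack_typing_ArgE rtyping_ResE
        intro!: cmd_typedI rt_unit)
qed

lemma central_polty: "central W \<Longrightarrow> polty W = Pos"
  by (induction rule: central.induct) auto

inductive_cases central_TTensorE: "central (TTensor A B)"
inductive_cases central_TPlusE: "central (TPlus A B)"
inductive_cases not_central: "central TR" "central (TLolli A B)" "central (TWith A B)"
inductive_cases is_val_E: "is_val (Pair v w)" "is_val (Inj1 v)" "is_val (Inj2 v)"
  "is_val (Let p x t u q)" "is_val (DTens v x y t q)" "is_val (DOne v t q)"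
  "is_val (DSum v x t y u q)" "is_val (App v w q)" "is_val (Proj i v q)"

lemma central_value_no_resources:
  assumes "rtyping \<Gamma> R v W" "is_val v" "central W"
  shows "R = {#}"
  using assms
  by (induction rule: rtyping.induct)
    (auto simp: central_polty elim!: is_val_E elim: not_central central_TTensorE central_TPlusE)

lemma cmd_typed_steps: "steps c c' \<Longrightarrow> cmd_typed W M c \<Longrightarrow> cmd_typed W M c'"
  by (induction rule: rtranclp_induct) (auto intro: cmd_typed_step)

theorem theorem5:
  fixes W :: ty and t v :: tm and l l' :: "nat list" and e :: pol
  assumes "central W"
    and "is_exp t" and "fv t = {}"
    and "typing [] t W"
    and "is_val v"
    and "steps (t, [], l, Pos) (v, [], l', e)"
  shows "\<exists>\<sigma>. \<sigma> permutes {..<length l} \<and> l' = permute_list \<sigma> l"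
proof -
  have "rtyping Map.empty {#} t W"
    using typing_rtyping[OF assms(4)] by simp
  then have "cmd_typed W (mset l) (t, [], l, Pos)"
    by (rule cmd_typedI[OF _ st_nil]) simp
  then have "cmd_typed W (mset l) (v, [], l', e)"
    by (rule cmd_typed_steps[OF assms(6)])
  then obtain A R1 R2 where
    v: "rtyping Map.empty R1 v A" and "stack_typing W [] A R2" "R1 + R2 + mset l' = mset l"
    by (rule cmd_typedE)
  moreover from \<open>stack_typing W [] A R2\<close> have "A = W" "R2 = {#}"
    by (auto elim: stack_typing_NilE)
  moreover have "R1 = {#}"
    using central_value_no_resources[OF v assms(5)] assms(1) \<open>A = W\<close> by simp
  ultimately have "mset l' = mset l"
    by simp
  then obtain \<sigma> where "\<sigma> permutes {..<length l}" "permute_list \<sigma> l = l'"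
    by (rule mset_eq_permutation)
  then show ?thesis
    by metis
qed

end
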